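(* Let $P=\{p_1,\dots,p_n\}$ be a set of points in the plane with pairwise distinct $x$-coordinates, indexed by increasing $x$-coordinate, and let $l_1,\dots,l_{n-1}$ be vertical lines such that $p_1$ lies to the left of $l_1$, $p_n$ lies to the right of $l_{n-1}$, and for $2\le j\le n-1$ the point $p_j$ is the only point of $P$ in the vertical slab between $l_{j-1}$ and $l_j$. Fix $1\le i\le n-2$ and let $p=p_{i+1}$. Then $p$ has degree $0$, $1$, or $2$ in every T-path $\pi\in\Pi(l_i,P)$ and in every T-path $\pi'\in\Pi(l_{i+1},P)$. Moreover, if $\pi\in\Pi(l_i,P)$ and $\pi'\in\Pi(l_{i+1},P)$ do not cross, then $p$ cannot have degree $0$ in both $\pi$ and $\pi'$, i.e. $p$ is a vertex of at least one of them.
   Context: A triangulation of $P$ is a crossing-free straight-line plane graph on $P$ whose outer face boundary is the boundary of $\mathrm{CH}(P)$ and all of whose bounded faces are empty triangles. A separating line w.r.t. $P$ is a line $l$ with $l\cap P=\emptyset$ and $l\cap\mathrm{CH}(P)\ne\emptyset$. The T-path $\pi_l(T)$ of a triangulation $T$ w.r.t. $l$ is the chain of edges of $T$ such that (1) every edge intersects $l$; (2) the first and last edges are the two edges of $\mathrm{CH}(P)$ intersected by $l$; (3) the region bounded by any two consecutive edges of the chain and $l$ contains no point of $P$ (it exists and is unique). $\Pi(l,P)=\{\pi_l(T): T\text{ a triangulation of }P\}$. The degree of a point in a T-path is its degree in the graph formed by the path's edges (0 if it is not a vertex of the path). Two T-paths cross if some edges of them properly intersect. *)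

theory Defs
  imports "HOL-Analysis.Analysis"
begin

type_synonym pt = "real \<times> real"

text \<open>A line is given as a pair (u, b) with u nonzero, standing for the set of z with u \<bullet> z = b.\<close>
type_synonym line = "pt \<times> real"

definition line_set :: "line \<Rightarrow> pt set" where
  "line_set L = {z. fst L \<bullet> z = snd L}"

definition vline :: "real \<Rightarrow> line" where
  "vline c = ((1, 0), c)"

definition separating_line :: "pt set \<Rightarrow> line \<Rightarrow> bool" where
  "separating_line P L \<longleftrightarrow> fst L \<noteq> 0 \<and> line_set L \<inter> P = {} \<and> line_set L \<inter> convex hull P \<noteq> {}"

text \<open>Triangulation of P, as its set of (empty, nondegenerate) bounded triangular faces:
  triangles with vertices in P, containing no further point of P, with pairwise disjoint
  interiors, whose union is the convex hull of P.\<close>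
definition triangulation :: "pt set \<Rightarrow> pt set set \<Rightarrow> bool" where
  "triangulation P T \<longleftrightarrow>
     (\<forall>t\<in>T. t \<subseteq> P \<and> card t = 3 \<and> \<not> collinear t \<and> convex hull t \<inter> P = t) \<and>
     (\<forall>t\<in>T. \<forall>t'\<in>T. t \<noteq> t' \<longrightarrow> interior (convex hull t) \<inter> interior (convex hull t') = {}) \<and>
     \<Union> ((\<lambda>t. convex hull t) ` T) = convex hull P"

definition tri_edges :: "pt set set \<Rightarrow> pt set set" where
  "tri_edges T = {{a, b} | a b. a \<noteq> b \<and> (\<exists>t\<in>T. a \<in> t \<and> b \<in> t)}"

definition hull_edge :: "pt set \<Rightarrow> pt \<Rightarrow> pt \<Rightarrow> bool" where
  "hull_edge P a b \<longleftrightarrow> a \<in> P \<and> b \<in> P \<and> a \<noteq> b \<and>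
     closed_segment a b \<subseteq> frontier (convex hull P) \<and> closed_segment a b \<inter> P = {a, b}"

text \<open>Segment ab intersects line L (with a, b not on L: strictly opposite sides).\<close>
definition crosses_line :: "line \<Rightarrow> pt \<Rightarrow> pt \<Rightarrow> bool" where
  "crosses_line L a b \<longleftrightarrow> closed_segment a b \<inter> line_set L \<noteq> {}"

definition xpt :: "line \<Rightarrow> pt \<Rightarrow> pt \<Rightarrow> pt" where
  "xpt L a b = a + ((snd L - fst L \<bullet> a) / (fst L \<bullet> (b - a))) *\<^sub>R (b - a)"

definition along :: "line \<Rightarrow> pt \<Rightarrow> real" where
  "along L z = (- snd (fst L), fst (fst L)) \<bullet> z"

text \<open>A T-path of T w.r.t. L, given as the list of vertices v0, v1, ..., vk of the chain.\<close>
definition is_tpath :: "pt set \<Rightarrow> pt set set \<Rightarrow> line \<Rightarrow> pt list \<Rightarrow> bool" where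
  "is_tpath P T L vs \<longleftrightarrow>
     separating_line P L \<and> 2 \<le> length vs \<and>
     (\<forall>j. Suc j < length vs \<longrightarrow>
        {vs ! j, vs ! Suc j} \<in> tri_edges T \<and> crosses_line L (vs ! j) (vs ! Suc j)) \<and>
     hull_edge P (vs ! 0) (vs ! 1) \<and>
     hull_edge P (vs ! (length vs - 2)) (vs ! (length vs - 1)) \<and>
     {vs ! 0, vs ! 1} \<noteq> {vs ! (length vs - 2), vs ! (length vs - 1)} \<and>
     (\<forall>j. 0 < j \<and> Suc j < length vs \<longrightarrow>
        convex hull {vs ! j, xpt L (vs ! (j - 1)) (vs ! j), xpt L (vs ! j) (vs ! Suc j)} \<inter> P
          \<subseteq> {vs ! j}) \<and>
     (let ys = map (\<lambda>j. along L (xpt L (vs ! j) (vs ! Suc j))) [0..<length vs - 1]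
      in sorted_wrt (<) ys \<or> sorted_wrt (>) ys)"

definition path_edges :: "pt list \<Rightarrow> pt set set" where
  "path_edges vs = {{vs ! j, vs ! Suc j} | j. Suc j < length vs}"

definition tdeg :: "pt \<Rightarrow> pt list \<Rightarrow> nat" where
  "tdeg q vs = card {e \<in> path_edges vs. q \<in> e}"

definition proper_cross :: "pt set \<Rightarrow> pt set \<Rightarrow> bool" where
  "proper_cross e e' \<longleftrightarrow> (\<exists>a b c d. e = {a, b} \<and> e' = {c, d} \<and>
      open_segment a b \<inter> open_segment c d \<noteq> {} \<and> \<not> collinear {a, b, c, d})"

definition tpaths_cross :: "pt list \<Rightarrow> pt list \<Rightarrow> bool" where
  "tpaths_cross vs ws \<longleftrightarrow> (\<exists>e\<in>path_edges vs. \<exists>e'\<in>path_edges ws. proper_cross e e')"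

end

theory Submission
  imports Defs
begin

text \<open>
  All edges of a T-path w.r.t. a vertical line cross it, and the ordinates of the crossings are
  strictly monotone along the path. The point \<open>p = p\<^sub>i\<^sub>+\<^sub>1\<close> is the only point of \<open>P\<close> between
  \<open>l\<^sub>i\<close> and \<open>l\<^sub>i\<^sub>+\<^sub>1\<close>. If it occurred twice on a T-path, the edge after the one leaving its
  first occurrence would have its crossing between those of the edges at the two occurrences of
  \<open>p\<close>, yet pass above or below \<open>p\<close>; it would then cross one of these edges of the same
  triangulation. So \<open>p\<close> is visited at most once and has degree at most 2.

  If \<open>p\<close> lies on neither path, each path, being anchored at two hull edges with \<open>p\<close> between
  them, has a vertex whose two path edges pass above and below \<open>p\<close>; the empty region of the
  path at this vertex forces it to lie left of \<open>l\<^sub>i\<close> for the first path and right of \<open>l\<^sub>i\<^sub>+\<^sub>1\<close>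
  for the second. Of the two upper edges of these opposite wedges, the lower one at the abscissa
  of \<open>p\<close> is trapped in the other wedge and, as the paths do not cross, must join the two apices;
  likewise for the lower edges. So the segment joining the apices passes both above and below
  \<open>p\<close>, which is absurd.
\<close>

section \<open>Lines through two points\<close>

definition slope :: "pt \<Rightarrow> pt \<Rightarrow> real" where
  "slope a b = (snd b - snd a) / (fst b - fst a)"

definition line_y :: "pt \<Rightarrow> pt \<Rightarrow> real \<Rightarrow> real" where
  "line_y a b x = snd a + (x - fst a) * slope a b"

definition distinct_abscissae :: "pt set \<Rightarrow> bool" where
  "distinct_abscissae P \<longleftrightarrow> (\<forall>q\<in>P. \<forall>q'\<in>P. fst q = fst q' \<longrightarrow> q = q')"

definition empty_segment :: "pt set \<Rightarrow> pt \<Rightarrow> pt \<Rightarrow> bool" where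
  "empty_segment P a b \<longleftrightarrow> closed_segment a b \<inter> P \<subseteq> {a, b}"

lemma empty_segment_commute: "empty_segment P a b = empty_segment P b a"
  unfolding empty_segment_def by (auto simp: closed_segment_commute)

lemma line_y_commute: "fst a \<noteq> fst b \<Longrightarrow> line_y a b x = line_y b a x"
  unfolding line_y_def slope_def by (simp add: field_simps)

lemma line_y_left [simp]: "line_y a b (fst a) = snd a"
  by (simp add: line_y_def)

lemma line_y_right: "fst a \<noteq> fst b \<Longrightarrow> line_y a b (fst b) = snd b"
  by (simp add: line_y_def slope_def)

lemma line_y_diff_affine: "\<exists>A B. \<forall>x. line_y a b x - line_y c d x = A + B * x"
  by (rule exI[of _ "snd a - fst a * slope a b - snd c + fst c * slope c d"],
      rule exI[of _ "slope a b - slope c d"]) (simp add: line_y_def algebra_simps)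

lemma line_y_eq_affine:
  assumes "fst c \<noteq> fst d" "snd c = \<alpha> + \<gamma> * fst c" "snd d = \<alpha> + \<gamma> * fst d"
  shows "line_y c d x = \<alpha> + \<gamma> * x"
proof -
  have "slope c d = \<gamma>"
    unfolding slope_def using assms by (simp add: field_simps)
  then show ?thesis unfolding line_y_def using assms(2) by (simp add: algebra_simps)
qed

lemma line_y_eqI:
  assumes "fst a \<noteq> fst b" "fst c \<noteq> fst d" "x1 \<noteq> x2"
    "line_y a b x1 = line_y c d x1" "line_y a b x2 = line_y c d x2"
  shows "line_y a b x = line_y c d x"
proof -
  have "(x1 - x2) * slope a b = (x1 - x2) * slope c d"
    using assms(4,5) unfolding line_y_def by (simp add: algebra_simps)
  then have "slope a b = slope c d" using assms(3) by simp
  then show ?thesis using assms(4) unfolding line_y_def by (simp add: algebra_simps)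
qed

lemma snd_normal_nonzero:
  fixes a b h :: pt
  assumes "h \<noteq> 0" "fst a \<noteq> fst b" "inner h a = inner h b"
  shows "snd h \<noteq> 0"
proof
  assume h2: "snd h = 0"
  then have "fst h \<noteq> 0" using assms(1) by (simp add: prod_eq_iff)
  moreover have "fst h * fst a = fst h * fst b" using assms(3) h2 by (simp add: inner_prod_def)
  ultimately show False using assms(2) by simp
qed

lemma line_y_of_inner_eq:
  fixes a b h :: pt
  assumes "h \<noteq> 0" "fst a \<noteq> fst b" "inner h a = \<beta>" "inner h b = \<beta>"
  shows "line_y a b x = \<beta> / snd h + (- fst h / snd h) * x"
proof -
  have ip: "inner h q = fst h * fst q + snd h * snd q" for q
    by (simp add: inner_prod_def)
  have "snd h \<noteq> 0" using snd_normal_nonzero assms by simp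
  then have "snd q = \<beta> / snd h + (- fst h / snd h) * fst q" if "inner h q = \<beta>" for q
    using that ip[of q] by (simp add: field_simps)
  then show ?thesis using line_y_eq_affine assms(2-4) by blast
qed

lemma collinear_imp_line_y:
  assumes "collinear {c, d, a}" "fst c \<noteq> fst d"
  shows "snd a = line_y c d (fst a)"
proof -
  have "collinear {c, a, d}" using assms(1) by (simp add: insert_commute)
  then obtain u where u: "a = u *\<^sub>R c + (1 - u) *\<^sub>R d"
    using assms(2) unfolding collinear_3_expand by auto
  have fa: "fst a = u * fst c + (1 - u) * fst d" and sa: "snd a = u * snd c + (1 - u) * snd d"
    using u by auto
  have "fst d - fst c \<noteq> 0" using assms(2) by simp
  then have "(fst d - fst c) * slope c d = snd d - snd c" by (simp add: slope_def)
  moreover have "fst a - fst c = (1 - u) * (fst d - fst c)" by (simp add: fa algebra_simps)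
  ultimately have "(fst a - fst c) * slope c d = (1 - u) * (snd d - snd c)" by simp
  then show ?thesis unfolding line_y_def sa by (simp add: algebra_simps)
qed

lemma xpt_vline: "fst a \<noteq> fst b \<Longrightarrow> xpt (vline c) a b = (c, line_y a b c)"
  by (cases a, cases b) (simp add: xpt_def vline_def line_y_def slope_def field_simps)

lemma line_set_vline: "line_set (vline c) = {z. fst z = c}"
  by (auto simp: line_set_def vline_def inner_Pair_0 cong: prod.case_eq_if)

lemma along_vline: "along (vline c) z = snd z"
  by (cases z) (simp add: along_def vline_def)

lemma affine_fun_zero_between:
  fixes f :: "real \<Rightarrow> real"
  assumes f: "\<And>x. f x = A + B * x" and s: "f s < 0" and t: "0 < f t"
  shows "\<exists>x. min s t < x \<and> x < max s t \<and> f x = 0"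
proof -
  have B: "B \<noteq> 0" using s t f[of s] f[of t] by auto
  have "f (- A / B) = 0" using B by (simp add: f)
  moreover have "min s t < - A / B \<and> - A / B < max s t"
  proof (cases "B > 0")
    case True
    then have "s < - A / B" "- A / B < t" using s t f[of s] f[of t] by (simp_all add: field_simps)
    then show ?thesis by auto
  next
    case False
    then have "B < 0" using B by simp
    then have "- A / B < s" "t < - A / B" using s t f[of s] f[of t] by (simp_all add: field_simps)
    then show ?thesis by auto
  qed
  ultimately show ?thesis by blast
qed

lemma affine_fun_nonneg_between:
  fixes f :: "real \<Rightarrow> real"
  assumes f: "\<And>x. f x = A + B * x" and "0 \<le> f s" "0 \<le> f t"
    and "min s t \<le> x" "x \<le> max s t"
  shows "0 \<le> f x"
proof (cases "B \<ge> 0")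
  case True
  have "B * min s t \<le> B * x" using True assms by (simp add: mult_left_mono)
  moreover have "0 \<le> A + B * min s t" using assms by (auto simp: min_def)
  ultimately show ?thesis using f by simp
next
  case False
  have "B * max s t \<le> B * x" using False assms by (simp add: mult_left_mono_neg)
  moreover have "0 \<le> A + B * max s t" using assms by (auto simp: max_def)
  ultimately show ?thesis using f by simp
qed

lemma closed_segment_memI:
  fixes q a b :: pt
  assumes "0 \<le> u" "u \<le> 1" "fst q = (1-u)* fst a + u* fst b" "snd q = (1-u)* snd a + u* snd b"
  shows "q \<in> closed_segment a b"
  unfolding in_segment
  using assms by (intro exI[of _ u]) (auto simp: prod_eq_iff)

lemma in_open_segment_line_y:
  fixes a b :: pt
  assumes "min (fst a) (fst b) < x" "x < max (fst a) (fst b)"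
  shows "(x, line_y a b x) \<in> open_segment a b"
proof -
  have ne: "fst a \<noteq> fst b" using assms by auto
  define u where "u = (x - fst a) / (fst b - fst a)"
  have u01: "0 < u" "u < 1" using assms ne unfolding u_def
    by (auto simp: min_def max_def divide_simps split: if_splits)
  have ne': "fst b - fst a \<noteq> 0" using ne by simp
  have e1: "u * (fst b - fst a) = x - fst a" using ne' by (simp add: u_def)
  have e2: "line_y a b x = snd a + u * (snd b - snd a)" by (simp add: line_y_def slope_def u_def)
  have "(x, line_y a b x) \<in> closed_segment a b"
    using u01 e1 e2 by (intro closed_segment_memI[of u]) (auto simp: algebra_simps)
  moreover have "(x, line_y a b x) \<noteq> a" "(x, line_y a b x) \<noteq> b" using assms
    by (cases a, cases b, auto simp: min_def max_def split: if_splits)+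
  ultimately show ?thesis by (simp add: open_segment_def)
qed

lemma closed_segment_line_y:
  fixes a b z :: pt
  assumes "z \<in> closed_segment a b" "fst a \<noteq> fst b"
  shows "snd z = line_y a b (fst z)" "min (fst a) (fst b) \<le> fst z" "fst z \<le> max (fst a) (fst b)"
proof -
  obtain u where u: "0 \<le> u" "u \<le> 1" "z = (1 - u) *\<^sub>R a + u *\<^sub>R b" using assms(1) unfolding in_segment by auto
  have fz: "fst z = (1-u)* fst a + u* fst b" and sz: "snd z = (1-u)* snd a + u* snd b" using u(3) by auto
  have ne': "fst b - fst a \<noteq> 0" using assms(2) by simp
  show "snd z = line_y a b (fst z)" using ne' unfolding fz sz line_y_def slope_def by (simp add: field_simps)
  have "(1-u)* fst a + u* fst b \<ge> (1-u)*min (fst a) (fst b) + u * min (fst a) (fst b)"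
    by (intro add_mono mult_left_mono) (use u in auto)
  then show "min (fst a) (fst b) \<le> fst z" unfolding fz by (simp add: algebra_simps)
  have "(1-u)* fst a + u* fst b \<le> (1-u)*max (fst a) (fst b) + u * max (fst a) (fst b)"
    by (intro add_mono mult_left_mono) (use u in auto)
  then show "fst z \<le> max (fst a) (fst b)" unfolding fz by (simp add: algebra_simps)
qed

lemma crosses_vline_opposite_sides:
  assumes "crosses_line (vline c) a b" "fst a \<noteq> c" "fst b \<noteq> c"
  shows "(fst a < c) \<noteq> (fst b < c)"
proof -
  obtain z where z: "z \<in> closed_segment a b" "fst z = c"
    using assms(1) by (auto simp: crosses_line_def line_set_vline)
  show ?thesis
  proof (cases "fst a = fst b")
    case True
    obtain u where u: "0 \<le> u" "u \<le> 1" "z = (1 - u) *\<^sub>R a + u *\<^sub>R b" using z(1) unfolding in_segment by auto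
    have "fst z = (1-u)* fst a + u* fst b" using u(3) by auto
    also have "\<dots> = fst a" using True by (simp add: algebra_simps)
    finally show ?thesis using z assms by simp
  next
    case False
    from closed_segment_line_y(2,3)[OF z(1) False] z(2) assms(2,3) show ?thesis
      by (auto simp: min_def max_def split: if_splits)
  qed
qed

lemma in_convex_hull_wedge:
  fixes v q :: pt
  assumes "fst v \<noteq> c"
    and "min (fst v) c \<le> fst q" "fst q \<le> max (fst v) c"
    and "min (line_y v a (fst q)) (line_y v b (fst q)) \<le> snd q" "snd q \<le> max (line_y v a (fst q)) (line_y v b (fst q))"
  shows "q \<in> convex hull {v, (c, line_y v a c), (c, line_y v b c)}"
proof -
  let ?H = "convex hull {v, (c, line_y v a c), (c, line_y v b c)}"
  define lam where "lam = (fst q - fst v) / (c - fst v)"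
  have l01: "0 \<le> lam" "lam \<le> 1" using assms(1,2,3) unfolding lam_def
    by (auto simp: min_def max_def divide_simps split: if_splits)
  have ne': "c - fst v \<noteq> 0" using assms(1) by simp
  have fq: "fst q = fst v + lam * (c - fst v)" using ne' by (simp add: lam_def)
  have pa: "(fst q, line_y v a (fst q)) \<in> closed_segment v (c, line_y v a c)"
    using l01 by (intro closed_segment_memI[of lam]) (simp_all add: fq line_y_def algebra_simps)
  have pb: "(fst q, line_y v b (fst q)) \<in> closed_segment v (c, line_y v b c)"
    using l01 by (intro closed_segment_memI[of lam]) (simp_all add: fq line_y_def algebra_simps)
  have cv: "convex ?H" by (rule convex_convex_hull)
  have "v \<in> ?H" "(c, line_y v a c) \<in> ?H" "(c, line_y v b c) \<in> ?H" by (auto intro: hull_inc)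
  then have A: "(fst q, line_y v a (fst q)) \<in> ?H" and B: "(fst q, line_y v b (fst q)) \<in> ?H"
    using closed_segment_subset[OF _ _ cv] pa pb by blast+
  have "q \<in> closed_segment (fst q, line_y v a (fst q)) (fst q, line_y v b (fst q))"
  proof (cases "line_y v a (fst q) = line_y v b (fst q)")
    case True
    then show ?thesis using assms(4,5) by (auto simp: prod_eq_iff)
  next
    case False
    define mu where "mu = (snd q - line_y v a (fst q)) / (line_y v b (fst q) - line_y v a (fst q))"
    have F': "line_y v b (fst q) - line_y v a (fst q) \<noteq> 0" using False by simp
    have "0 \<le> mu" "mu \<le> 1" using False assms(4,5) unfolding mu_def
      by (auto simp: min_def max_def divide_simps split: if_splits)
    moreover have sq: "snd q = line_y v a (fst q) + mu * (line_y v b (fst q) - line_y v a (fst q))"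
      using F' by (simp add: mu_def)
    ultimately show ?thesis
      using F' by (intro closed_segment_memI[of mu]) (simp_all add: sq algebra_simps)
  qed
  then show ?thesis using closed_segment_subset[OF A B cv] by blast
qed

lemma open_segment_line_y:
  fixes a b z :: pt
  assumes "z \<in> open_segment a b" "fst a \<noteq> fst b"
  shows "min (fst a) (fst b) < fst z" "fst z < max (fst a) (fst b)" "snd z = line_y a b (fst z)"
proof -
  have z: "z \<in> closed_segment a b" "z \<noteq> a" "z \<noteq> b" using assms(1) by (auto simp: open_segment_def)
  note c = closed_segment_line_y[OF z(1) assms(2)]
  have "fst z \<noteq> fst a"
  proof
    assume "fst z = fst a" then have "snd z = snd a" using c(1) by simp
    then show False using z \<open>fst z = fst a\<close> by (simp add: prod_eq_iff)
  qed
  moreover have "fst z \<noteq> fst b"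
  proof
    assume "fst z = fst b" then have "snd z = snd b" using c(1) line_y_right[OF assms(2)] by simp
    then show False using z \<open>fst z = fst b\<close> by (simp add: prod_eq_iff)
  qed
  ultimately show "min (fst a) (fst b) < fst z" "fst z < max (fst a) (fst b)" "snd z = line_y a b (fst z)"
    using c by (auto simp: min_def max_def split: if_splits)
qed

lemma not_on_empty_segment:
  assumes "empty_segment P s q" "w \<in> P"
    and "min (fst s) (fst q) < fst w" "fst w < max (fst s) (fst q)"
  shows "line_y s q (fst w) \<noteq> snd w"
proof
  assume "line_y s q (fst w) = snd w"
  then have "w \<in> open_segment s q"
    using in_open_segment_line_y[OF assms(3,4)] by (simp add: prod_eq_iff)
  then show False using assms(1-4) unfolding empty_segment_def open_segment_def by auto
qed

lemma empty_segments_on_common_line_eq: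
  assumes P: "a \<in> P" "b \<in> P" "c \<in> P" "d \<in> P" and xi: "distinct_abscissae P"
    and e: "empty_segment P a b" "empty_segment P c d" and ne: "fst a \<noteq> fst b" "fst c \<noteq> fst d"
    and L: "\<And>x. line_y a b x = line_y c d x"
    and x0: "min (fst a) (fst b) < x0" "x0 < max (fst a) (fst b)"
            "min (fst c) (fst d) < x0" "x0 < max (fst c) (fst d)"
  shows "{a, b} = {c, d}"
proof -
  have "line_y a b (fst q) = snd q" if "q \<in> {c, d}" for q
    using that L line_y_right[OF ne(2)] by auto
  then have out_ab: "\<not> (min (fst a) (fst b) < fst q \<and> fst q < max (fst a) (fst b))"
    if "q \<in> {c, d}" for q
    using not_on_empty_segment[OF e(1)] P that by blast
  have "line_y c d (fst q) = snd q" if "q \<in> {a, b}" for q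
    using that L[symmetric] line_y_right[OF ne(1)] by auto
  then have out_cd: "\<not> (min (fst c) (fst d) < fst q \<and> fst q < max (fst c) (fst d))"
    if "q \<in> {a, b}" for q
    using not_on_empty_segment[OF e(2)] P that by blast
  have "(fst c = fst a \<or> fst c = fst b) \<and> (fst d = fst a \<or> fst d = fst b)"
    using out_ab[of c] out_ab[of d] out_cd[of a] out_cd[of b] x0 ne
    by (auto simp: min_def max_def split: if_splits)
  then have "c = a \<or> c = b" "d = a \<or> d = b"
    using xi P unfolding distinct_abscissae_def by metis+
  then show ?thesis using ne by auto
qed

lemma proper_crossI:
  assumes P: "a \<in> P" "b \<in> P" "c \<in> P" "d \<in> P" and xi: "distinct_abscissae P"
    and e: "empty_segment P a b" "empty_segment P c d" and ne: "fst a \<noteq> fst b" "fst c \<noteq> fst d"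
    and z: "z \<in> open_segment a b" "z \<in> open_segment c d"
    and dif: "{a, b} \<noteq> {c, d}"
  shows "proper_cross {a, b} {c, d}"
proof -
  have "\<not> collinear {a, b, c, d}"
  proof
    assume col: "collinear {a, b, c, d}"
    have "snd a = line_y c d (fst a)"
      by (rule collinear_imp_line_y[OF collinear_subset[OF col] ne(2)]) auto
    moreover have "snd b = line_y c d (fst b)"
      by (rule collinear_imp_line_y[OF collinear_subset[OF col] ne(2)]) auto
    ultimately have L: "line_y a b x = line_y c d x" for x
      using line_y_eqI[OF ne(1) ne(2) ne(1), of x] line_y_right[OF ne(1)] by simp
    note z1 = open_segment_line_y[OF z(1) ne(1)] and z2 = open_segment_line_y[OF z(2) ne(2)]
    show False using empty_segments_on_common_line_eq[OF P xi e ne L z1(1,2) z2(1,2)] dif by simp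
  qed
  then show ?thesis unfolding proper_cross_def using z by blast
qed

section \<open>Triangulations\<close>

lemma tri_edgesE:
  assumes "{a, b} \<in> tri_edges T"
  obtains t where "t \<in> T" "a \<in> t" "b \<in> t" "a \<noteq> b"
  using assms unfolding tri_edges_def by (auto simp: doubleton_eq_iff)

lemma triangulation_triangleE:
  assumes "triangulation P T" "t \<in> T"
  obtains x y w where "t = {x, y, w}" "x \<noteq> y" "y \<noteq> w" "x \<noteq> w" "\<not> collinear t" "t \<subseteq> P"
    "convex hull t \<inter> P = t"
  using assms unfolding triangulation_def card_3_iff by metis

lemma triangulation_interior_nonempty:
  assumes "triangulation P T" "t \<in> T"
  shows "interior (convex hull t) \<noteq> {}"
proof -
  obtain x y w where t: "t = {x, y, w}" "x \<noteq> y" "y \<noteq> w" "x \<noteq> w" "\<not> collinear t"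
    using triangulation_triangleE[OF assms] by metis
  have "card t = Suc (DIM(pt))" using t by auto
  moreover have "\<not> affine_dependent t" using t collinear_3_eq_affine_dependent by metis
  ultimately show ?thesis using interior_convex_hull_eq_empty by blast
qed

lemma triangulation_hull_interior_nonempty:
  assumes "triangulation P T" "P \<noteq> {}"
  shows "interior (convex hull P) \<noteq> {}"
proof -
  have "T \<noteq> {}"
    using assms hull_subset[of P convex] unfolding triangulation_def by auto
  then obtain t where t: "t \<in> T" by blast
  then have "interior (convex hull t) \<subseteq> interior (convex hull P)"
    using assms(1) unfolding triangulation_def by (intro interior_mono hull_mono) auto
  then show ?thesis using triangulation_interior_nonempty[OF assms(1) t] by auto
qed

lemma tri_edgesD:
  assumes T: "triangulation P T" and e: "{a, b} \<in> tri_edges T"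
  shows "a \<in> P" "b \<in> P" "a \<noteq> b" "empty_segment P a b"
proof -
  obtain t where t: "t \<in> T" "a \<in> t" "b \<in> t" "a \<noteq> b" using tri_edgesE[OF e] by metis
  obtain x y w where tt: "t = {x, y, w}" "x \<noteq> y" "y \<noteq> w" "x \<noteq> w" "\<not> collinear t" "t \<subseteq> P"
    "convex hull t \<inter> P = t" using triangulation_triangleE[OF T t(1)] by metis
  show "a \<in> P" "b \<in> P" "a \<noteq> b" using t tt by auto
  show "empty_segment P a b" unfolding empty_segment_def
  proof
    fix q assume q: "q \<in> closed_segment a b \<inter> P"
    have "closed_segment a b \<subseteq> convex hull t"
      unfolding segment_convex_hull by (rule hull_mono) (use t in auto)
    then have qt: "q \<in> t" using q tt(7) by auto
    show "q \<in> {a, b}"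
    proof (rule ccontr)
      assume nq: "q \<notin> {a, b}"
      have "{a, b, q} \<subseteq> t" using t qt by auto
      moreover have "card {a, b, q} = 3" using nq t by auto
      moreover have "card t = 3" using tt by auto
      ultimately have "t = {a, b, q}" by (metis card_subset_eq finite.emptyI finite.insertI tt(1))
      moreover have "collinear {a, b, q}"
        by (rule collinear_subset[OF collinear_closed_segment[of a b]]) (use q in auto)
      ultimately show False using tt(5) by simp
    qed
  qed
qed

lemma two_edges_of_triangle_share_vertex:
  assumes "card t = 3" "{a, b} \<subseteq> t" "{c, d} \<subseteq> t" "a \<noteq> b" "c \<noteq> d"
  shows "{a, b} \<inter> {c, d} \<noteq> {}"
proof
  assume "{a, b} \<inter> {c, d} = {}"
  then have "card {a, b, c, d} = 4" using assms(4,5) by auto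
  moreover have "card {a, b, c, d} \<le> card t"
    using assms(1-3) by (intro card_mono) (auto intro: card_ge_0_finite)
  ultimately show False using assms(1) by simp
qed

lemma triangulation_triangles_separated:
  assumes T: "triangulation P T" and t: "t1 \<in> T" "t2 \<in> T" "t1 \<noteq> t2"
  obtains h \<beta> where "h \<noteq> 0" "\<forall>x\<in>convex hull t1. inner h x \<le> \<beta>" "\<forall>x\<in>convex hull t2. \<beta> \<le> inner h x"
proof -
  let ?S1 = "interior (convex hull t1)" and ?S2 = "interior (convex hull t2)"
  have "?S1 \<inter> ?S2 = {}" using T t unfolding triangulation_def by blast
  then obtain h \<beta> where h: "h \<noteq> 0" "\<forall>x\<in>?S1. inner h x \<le> \<beta>" "\<forall>x\<in>?S2. inner h x \<ge> \<beta>"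
    using separating_hyperplane_sets[OF convex_interior[OF convex_convex_hull]
        convex_interior[OF convex_convex_hull] triangulation_interior_nonempty[OF T t(1)]
        triangulation_interior_nonempty[OF T t(2)]]
    by blast
  have "finite t" if "t \<in> T" for t
    using T that unfolding triangulation_def by (metis card.infinite zero_neq_numeral)
  then have cl: "closure (interior (convex hull t)) = convex hull t" if "t \<in> T" for t
    using convex_closure_interior[OF convex_convex_hull triangulation_interior_nonempty[OF T that]] that
    by (simp add: finite_imp_compact)
  have "closure ?S1 \<subseteq> {x. inner h x \<le> \<beta>}"
    by (rule closure_minimal) (use h closed_halfspace_le in auto)
  moreover have "closure ?S2 \<subseteq> {x. inner h x \<ge> \<beta>}"
    by (rule closure_minimal) (use h closed_halfspace_ge in auto)
  ultimately show ?thesis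
    using that[OF h(1)] unfolding cl[OF t(1)] cl[OF t(2)] by blast
qed

lemma open_segment_in_halfspace_on_boundary:
  fixes a b z h :: "'a::real_inner"
  assumes "z \<in> open_segment a b" "inner h a \<le> \<beta>" "inner h b \<le> \<beta>" "inner h z = \<beta>"
  shows "inner h a = \<beta>" "inner h b = \<beta>"
proof -
  obtain u where u: "0 < u" "u < 1" "z = (1 - u) *\<^sub>R a + u *\<^sub>R b"
    using assms(1) unfolding in_segment by auto
  then have "inner h z = (1 - u) * inner h a + u * inner h b"
    by (simp add: inner_add_right)
  then have "(1 - u) * (\<beta> - inner h a) + u * (\<beta> - inner h b) = 0"
    using assms(4) by (simp add: algebra_simps)
  moreover have "0 \<le> (1 - u) * (\<beta> - inner h a)" "0 \<le> u * (\<beta> - inner h b)"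
    using assms(2,3) u(1,2) by simp_all
  ultimately have "(1 - u) * (\<beta> - inner h a) = 0" "u * (\<beta> - inner h b) = 0" by linarith+
  then show "inner h a = \<beta>" "inner h b = \<beta>" using u(1,2) by simp_all
qed

lemma tri_edges_no_crossing:
  assumes T: "triangulation P T" and xi: "distinct_abscissae P"
    and e1: "{a, b} \<in> tri_edges T" and e2: "{c, d} \<in> tri_edges T" and dif: "{a, b} \<noteq> {c, d}"
    and z: "z \<in> open_segment a b" "z \<in> open_segment c d"
  shows False
proof -
  note p1 = tri_edgesD[OF T e1] and p2 = tri_edgesD[OF T e2]
  have ne: "fst a \<noteq> fst b" "fst c \<noteq> fst d"
    using p1 p2 xi unfolding distinct_abscissae_def by blast+
  note z1 = open_segment_line_y[OF z(1) ne(1)] and z2 = open_segment_line_y[OF z(2) ne(2)]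
  obtain t1 where t1: "t1 \<in> T" "a \<in> t1" "b \<in> t1" using tri_edgesE[OF e1] by metis
  obtain t2 where t2: "t2 \<in> T" "c \<in> t2" "d \<in> t2" using tri_edgesE[OF e2] by metis
  have L: "line_y a b x = line_y c d x" for x
  proof (cases "t1 = t2")
    case True
    have "card t1 = 3" using T t1(1) unfolding triangulation_def by blast
    then obtain e where e: "e \<in> {a, b}" "e \<in> {c, d}"
      using two_edges_of_triangle_share_vertex[of t1 a b c d] True t1 t2 p1(3) p2(3) by blast
    have "line_y a b (fst e) = line_y c d (fst e)"
      using e line_y_right[OF ne(1)] line_y_right[OF ne(2)] by auto
    moreover have "fst e \<noteq> fst z" using e z1 by auto
    ultimately show ?thesis using line_y_eqI[OF ne, of "fst e" "fst z" x] z1(3) z2(3) by simp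
  next
    case False
    then obtain h \<beta> where h: "h \<noteq> 0" "\<forall>x\<in>convex hull t1. inner h x \<le> \<beta>"
      "\<forall>x\<in>convex hull t2. \<beta> \<le> inner h x"
      using triangulation_triangles_separated[OF T t1(1) t2(1)] by blast
    have "closed_segment a b \<subseteq> convex hull t1" "closed_segment c d \<subseteq> convex hull t2"
      unfolding segment_convex_hull using t1 t2 by (simp_all add: hull_mono)
    then have "z \<in> convex hull t1" "z \<in> convex hull t2"
      using z by (auto simp: open_segment_def)
    then have hz: "inner h z = \<beta>" using h(2,3) by (simp add: order_antisym)
    have "inner h a \<le> \<beta>" "inner h b \<le> \<beta>" "inner (- h) c \<le> - \<beta>" "inner (- h) d \<le> - \<beta>"
      using h t1 t2 by (auto intro: hull_inc)
    then have "inner h a = \<beta>" "inner h b = \<beta>" "inner (- h) c = - \<beta>" "inner (- h) d = - \<beta>"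
      using open_segment_in_halfspace_on_boundary[OF z(1), of h \<beta>]
        open_segment_in_halfspace_on_boundary[OF z(2), of "- h" "- \<beta>"] hz
      by simp_all
    then show ?thesis
      using line_y_of_inner_eq[OF h(1) ne(1)] line_y_of_inner_eq[OF h(1) ne(2)] by simp
  qed
  from empty_segments_on_common_line_eq[OF p1(1,2) p2(1,2) xi p1(4) p2(4) ne L z1(1,2) z2(1,2)]
  show False using dif by contradiction
qed

lemma hull_edge_supporting:
  assumes fin: "finite P" and int: "interior (convex hull P) \<noteq> {}"
    and he: "hull_edge P s t" and ne: "fst s \<noteq> fst t"
  obtains \<sigma> where "\<sigma> \<noteq> 0" "\<forall>q\<in>P. 0 \<le> \<sigma> * (snd q - line_y s t (fst q))"
proof -
  let ?S = "convex hull P"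
  define z where "z = (1/2) *\<^sub>R s + (1/2) *\<^sub>R t"
  have "z \<in> closed_segment s t"
    unfolding in_segment z_def by (rule exI[of _ "1/2"]) (simp add: algebra_simps)
  then have "z \<in> frontier ?S" using he unfolding hull_edge_def by auto
  moreover have clS: "closure ?S = ?S" using fin by (simp add: finite_imp_compact)
  ultimately have "z \<in> closure ?S" "z \<notin> rel_interior ?S"
    using rel_interior_nonempty_interior[OF int] unfolding frontier_def by auto
  then obtain h where h: "h \<noteq> 0" "\<And>y. y \<in> closure ?S \<Longrightarrow> inner h z \<le> inner h y"
    using supporting_hyperplane_relative_frontier[OF convex_convex_hull] by blast
  have P: "inner h z \<le> inner h q" if "q \<in> P" for q
    using h(2) that clS by (simp add: hull_inc)
  have "s \<in> P" "t \<in> P" using he unfolding hull_edge_def by auto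
  then have "inner h z \<le> inner h s" "inner h z \<le> inner h t" using P by blast+
  moreover have "inner h z = (1/2) * inner h s + (1/2) * inner h t"
    by (simp add: z_def inner_add_right)
  ultimately have st: "inner h s = inner h z" "inner h t = inner h z" by linarith+
  have "snd h \<noteq> 0" using snd_normal_nonzero[OF h(1) ne] st by simp
  moreover have "snd h * (snd q - line_y s t (fst q)) = inner h q - inner h z" for q
  proof -
    have "snd h * line_y s t (fst q) = inner h z - fst h * fst q"
      using line_y_of_inner_eq[OF h(1) ne st, of "fst q"] \<open>snd h \<noteq> 0\<close> by (simp add: field_simps)
    then show ?thesis by (simp add: inner_prod_def algebra_simps)
  qed
  ultimately show ?thesis using that[of "snd h"] P by (metis diff_ge_0_iff_ge)
qed

lemma supporting_line_below_segment:
  assumes "\<forall>q\<in>{a', b'}. 0 \<le> \<sigma> * (snd q - line_y a b (fst q))" "fst a' \<noteq> fst b'"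
    and "min (fst a') (fst b') \<le> x" "x \<le> max (fst a') (fst b')"
  shows "0 \<le> \<sigma> * (line_y a' b' x - line_y a b x)"
proof -
  obtain A B where AB: "\<And>x. line_y a' b' x - line_y a b x = A + B * x"
    using line_y_diff_affine by blast
  have "\<And>x. \<sigma> * (line_y a' b' x - line_y a b x) = \<sigma> * A + (\<sigma> * B) * x"
    unfolding AB by (simp add: algebra_simps)
  from affine_fun_nonneg_between[OF this _ _ assms(3,4)] show ?thesis
    using assms(1) line_y_right[OF assms(2)] by simp
qed

section \<open>T-paths with respect to a vertical line\<close>

locale vline_tpath =
  fixes P :: "pt set" and T :: "pt set set" and c :: real and vs :: "pt list"
  assumes triangulation: "triangulation P T" and distinct: "distinct_abscissae P"
    and tpath: "is_tpath P T (vline c) vs"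
begin

lemma length_ge_2: "2 \<le> length vs"
  using tpath unfolding is_tpath_def by auto

lemma not_on_line: "q \<in> P \<Longrightarrow> fst q \<noteq> c"
  using tpath unfolding is_tpath_def separating_line_def line_set_vline by auto

lemma edge: "Suc j < length vs \<Longrightarrow> {vs ! j, vs ! Suc j} \<in> tri_edges T"
  using tpath unfolding is_tpath_def by auto

lemma edgeD:
  assumes "Suc j < length vs"
  shows "vs ! j \<in> P" "vs ! Suc j \<in> P" "empty_segment P (vs ! j) (vs ! Suc j)"
    "fst (vs ! j) \<noteq> fst (vs ! Suc j)" "(fst (vs ! j) < c) \<noteq> (fst (vs ! Suc j) < c)"
proof -
  note e = tri_edgesD[OF triangulation edge[OF assms]]
  show "vs ! j \<in> P" "vs ! Suc j \<in> P" "empty_segment P (vs ! j) (vs ! Suc j)" using e by auto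
  show "fst (vs ! j) \<noteq> fst (vs ! Suc j)" using e distinct unfolding distinct_abscissae_def by blast
  have "crosses_line (vline c) (vs ! j) (vs ! Suc j)" using tpath assms unfolding is_tpath_def by auto
  then show "(fst (vs ! j) < c) \<noteq> (fst (vs ! Suc j) < c)"
    using crosses_vline_opposite_sides not_on_line e by blast
qed

lemma vertex_in_P: "j < length vs \<Longrightarrow> vs ! j \<in> P"
  using edgeD(1)[of j] edgeD(2)[of "j - 1"] length_ge_2
  by (cases "Suc j < length vs") (auto simp: Suc_diff_Suc)

definition cut_y :: "nat \<Rightarrow> real" where
  "cut_y j = line_y (vs ! j) (vs ! Suc j) c"

lemma cut_y_strict_mono:
  "(\<forall>i j. i < j \<and> j < length vs - 1 \<longrightarrow> cut_y i < cut_y j) \<or>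
   (\<forall>i j. i < j \<and> j < length vs - 1 \<longrightarrow> cut_y i > cut_y j)"
proof -
  let ?ys = "map (\<lambda>j. along (vline c) (xpt (vline c) (vs ! j) (vs ! Suc j))) [0..<length vs - 1]"
  have ys: "?ys ! j = cut_y j" if "j < length vs - 1" for j
    using that edgeD(4)[of j] by (simp add: along_vline xpt_vline cut_y_def)
  have "sorted_wrt (<) ?ys \<or> sorted_wrt (>) ?ys" using tpath unfolding is_tpath_def Let_def by auto
  then show ?thesis unfolding sorted_wrt_iff_nth_less using ys by auto
qed

lemma cut_y_neq: "i < j \<Longrightarrow> j < length vs - 1 \<Longrightarrow> cut_y i \<noteq> cut_y j"
  using cut_y_strict_mono by (metis less_irrefl)

lemma cut_y_between:
  assumes "i < j" "j < k" "k < length vs - 1"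
  shows "(cut_y i < cut_y j \<and> cut_y j < cut_y k) \<or> (cut_y i > cut_y j \<and> cut_y j > cut_y k)"
  using cut_y_strict_mono assms by (meson less_trans)

lemma empty_region:
  assumes "0 < j" "Suc j < length vs"
  shows "convex hull {vs ! j, (c, line_y (vs ! j) (vs ! (j - 1)) c), (c, line_y (vs ! j) (vs ! Suc j) c)}
           \<inter> P \<subseteq> {vs ! j}"
proof -
  have "fst (vs ! (j - 1)) \<noteq> fst (vs ! j)" using edgeD(4)[of "j - 1"] assms by simp
  moreover have "fst (vs ! j) \<noteq> fst (vs ! Suc j)" using edgeD(4)[of j] assms by simp
  moreover have "convex hull {vs ! j, xpt (vline c) (vs ! (j - 1)) (vs ! j),
      xpt (vline c) (vs ! j) (vs ! Suc j)} \<inter> P \<subseteq> {vs ! j}"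
    using tpath assms unfolding is_tpath_def by blast
  ultimately show ?thesis by (simp add: xpt_vline line_y_commute)
qed

lemma hull_edge_first: "hull_edge P (vs ! 0) (vs ! 1)"
  using tpath unfolding is_tpath_def by blast

lemma hull_edge_last: "hull_edge P (vs ! (length vs - 2)) (vs ! (length vs - 1))"
  using tpath unfolding is_tpath_def by blast

lemma length_ge_3: "3 \<le> length vs"
proof (rule ccontr)
  assume "\<not> 3 \<le> length vs"
  then have "length vs = 2" using length_ge_2 by simp
  then show False using tpath unfolding is_tpath_def by simp
qed

text \<open>Both end edges are hull edges, so \<open>P\<close> lies weakly on one side of each of their lines. If \<open>q\<close>
  were on the same side of both lines, so would be all of \<open>P\<close>; then each end edge would lie weakly
  on that side of the other's line, and the first and last crossings would coincide.\<close>

lemma end_edges_straddle: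
  assumes fin: "finite P" and q: "q \<in> P"
    and ne: "line_y (vs ! 0) (vs ! 1) (fst q) \<noteq> snd q"
      "line_y (vs ! (length vs - 2)) (vs ! (length vs - 1)) (fst q) \<noteq> snd q"
  shows "(line_y (vs ! 0) (vs ! 1) (fst q) < snd q) \<noteq>
         (line_y (vs ! (length vs - 2)) (vs ! (length vs - 1)) (fst q) < snd q)"
proof
  define K where "K = length vs - 2"
  have K: "0 < K" "Suc K < length vs" "Suc K = length vs - 1"
    using length_ge_3 unfolding K_def by auto
  define d0 where "d0 = snd q - line_y (vs ! 0) (vs ! Suc 0) (fst q)"
  define dK where "dK = snd q - line_y (vs ! K) (vs ! Suc K) (fst q)"
  have idx: "vs ! 1 = vs ! Suc 0" "vs ! (length vs - 2) = vs ! K" "vs ! (length vs - 1) = vs ! Suc K"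
    using K(3) unfolding K_def by simp_all
  assume "(line_y (vs ! 0) (vs ! 1) (fst q) < snd q) =
          (line_y (vs ! (length vs - 2)) (vs ! (length vs - 1)) (fst q) < snd q)"
  then have same: "(0 < d0) = (0 < dK)" and nz: "d0 \<noteq> 0" "dK \<noteq> 0"
    using ne unfolding d0_def dK_def idx by auto
  have int: "interior (convex hull P) \<noteq> {}"
    using triangulation_hull_interior_nonempty[OF triangulation] q by auto
  have e0: "Suc 0 < length vs" using K by simp
  note E0 = edgeD[OF e0] and EK = edgeD[OF K(2)]
  obtain s0 where s0: "s0 \<noteq> 0" "\<forall>q\<in>P. 0 \<le> s0 * (snd q - line_y (vs ! 0) (vs ! Suc 0) (fst q))"
    using hull_edge_supporting[OF fin int _ E0(4)] hull_edge_first unfolding idx by blast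
  obtain s1 where s1: "s1 \<noteq> 0" "\<forall>q\<in>P. 0 \<le> s1 * (snd q - line_y (vs ! K) (vs ! Suc K) (fst q))"
    using hull_edge_supporting[OF fin int _ EK(4)] hull_edge_last unfolding idx by blast
  have "0 \<le> s0 * d0" "0 \<le> s1 * dK" using s0(2) s1(2) q unfolding d0_def dK_def by blast+
  moreover have "s0 * d0 \<noteq> 0" "s1 * dK \<noteq> 0" using s0(1) s1(1) nz by simp_all
  ultimately have "0 < s0 * d0" "0 < s1 * dK" by linarith+
  then have sg: "(0 < s0) = (0 < s1)"
    using same by (auto simp: zero_less_mult_iff)
  have A0: "0 \<le> s0 * (cut_y K - cut_y 0)"
    unfolding cut_y_def using s0(2) EK(1,2,4,5)
    by (intro supporting_line_below_segment) (auto simp: min_def max_def)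
  have AK: "0 \<le> s1 * (cut_y 0 - cut_y K)"
    unfolding cut_y_def using s1(2) E0(1,2,4,5)
    by (intro supporting_line_below_segment) (auto simp: min_def max_def)
  have "cut_y 0 = cut_y K"
  proof (cases "0 < s0")
    case True
    then show ?thesis using sg A0 AK by (simp add: zero_le_mult_iff)
  next
    case False
    then have "s0 < 0" "s1 < 0" using sg s0(1) s1(1) by auto
    then show ?thesis using A0 AK by (simp add: zero_le_mult_iff)
  qed
  then show False using cut_y_neq K by simp
qed

end

section \<open>Degree at most two\<close>

lemma tri_edges_no_order_change:
  assumes T: "triangulation P T" and xi: "distinct_abscissae P"
    and e1: "{a, r} \<in> tri_edges T" and e2: "{p, b} \<in> tri_edges T" and dif: "{a, r} \<noteq> {p, b}"
    and side: "(fst a < c) \<noteq> (fst p < c)" "(fst b < c) \<noteq> (fst p < c)" "fst p \<noteq> c"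
    and r: "min c (fst r) < fst p" "fst p < max c (fst r)"
    and ne: "line_y a r c \<noteq> line_y p b c" "line_y a r (fst p) \<noteq> snd p"
  shows "(line_y a r c < line_y p b c) = (line_y a r (fst p) < snd p)"
proof (rule ccontr)
  assume sg: "(line_y a r c < line_y p b c) \<noteq> (line_y a r (fst p) < snd p)"
  note p1 = tri_edgesD[OF T e1] and p2 = tri_edgesD[OF T e2]
  define f where "f x = line_y a r x - line_y p b x" for x
  obtain A B where AB: "\<And>x. f x = A + B * x" using line_y_diff_affine[of a r p b] unfolding f_def by blast
  have fp: "f (fst p) = line_y a r (fst p) - snd p" by (simp add: f_def)
  have "\<exists>x. min c (fst p) < x \<and> x < max c (fst p) \<and> f x = 0"
  proof (cases "f c < 0")
    case True
    then have "0 < f (fst p)" using sg ne fp unfolding f_def by auto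
    then show ?thesis using affine_fun_zero_between[OF AB True] by blast
  next
    case False
    then have "0 < f c" "f (fst p) < 0" using sg ne fp unfolding f_def by auto
    moreover have "\<And>x. - f x = - A + - B * x" using AB by simp
    ultimately show ?thesis using affine_fun_zero_between[of "\<lambda>x. - f x"] by fastforce
  qed
  then obtain x0 where x0: "min c (fst p) < x0" "x0 < max c (fst p)" "f x0 = 0" by blast
  have "min (fst a) (fst r) < x0" "x0 < max (fst a) (fst r)"
    using x0 side r by (auto simp: min_def max_def split: if_splits)
  then have "(x0, line_y a r x0) \<in> open_segment a r" by (rule in_open_segment_line_y)
  moreover have "min (fst p) (fst b) < x0" "x0 < max (fst p) (fst b)"
    using x0 side by (auto simp: min_def max_def split: if_splits)
  then have "(x0, line_y p b x0) \<in> open_segment p b" by (rule in_open_segment_line_y)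
  moreover have "line_y p b x0 = line_y a r x0" using x0(3) by (simp add: f_def)
  ultimately show False using tri_edges_no_crossing[OF T xi e1 e2 dif] by auto
qed

text \<open>The edge \<open>ar\<close> meets the line \<open>x = c\<close> between \<open>pa\<close> and \<open>pb\<close> but passes above or below
  \<open>p\<close>, so it crosses one of them.\<close>

lemma tri_edge_not_through_wedge:
  assumes T: "triangulation P T" and xi: "distinct_abscissae P"
    and e: "{a, r} \<in> tri_edges T" "{p, a} \<in> tri_edges T" "{p, b} \<in> tri_edges T"
    and side: "(fst a < c) \<noteq> (fst p < c)" "(fst b < c) \<noteq> (fst p < c)" "fst p \<noteq> c"
    and r: "min c (fst r) < fst p" "fst p < max c (fst r)"
    and between: "(line_y p a c < line_y a r c \<and> line_y a r c < line_y p b c) \<or>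
                  (line_y p a c > line_y a r c \<and> line_y a r c > line_y p b c)"
  shows False
proof -
  have P: "p \<in> P" and ar: "empty_segment P a r"
    using tri_edgesD[OF T e(2)] tri_edgesD[OF T e(1)] by auto
  have "min (fst a) (fst r) < fst p" "fst p < max (fst a) (fst r)"
    using side r by (auto simp: min_def max_def split: if_splits)
  then have pne: "line_y a r (fst p) \<noteq> snd p" by (rule not_on_empty_segment[OF ar P])
  have "p \<noteq> a" "p \<noteq> r" using side r by auto
  then have "{a, r} \<noteq> {p, x}" for x by (auto simp: doubleton_eq_iff)
  note no_change = tri_edges_no_order_change[OF T xi e(1) _ this side(1) _ side(3) r _ pne]
  show False
    using no_change[OF e(2) side(1)] no_change[OF e(3) side(2)] between by fastforce
qed

context vline_tpath
begin

lemma isolated_vertex_not_revisited: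
  assumes iso: "\<forall>q\<in>P. q \<noteq> p \<longrightarrow> \<not> (min c (fst p) \<le> fst q \<and> fst q \<le> max c (fst p))"
    and jk: "j < k" "k < length vs" "vs ! j = p" "vs ! k = p"
  shows False
proof -
  have "p \<in> P" using vertex_in_P[of j] jk by simp
  then have pc: "fst p \<noteq> c" by (rule not_on_line)
  have "k \<noteq> Suc j" using edgeD(4)[of j] jk by auto
  then have ej: "Suc j < length vs" "Suc (Suc j) < length vs" using jk by auto
  define a where "a = vs ! Suc j"
  define r where "r = vs ! Suc (Suc j)"
  note E0 = edgeD[OF ej(1)] and E1 = edgeD[OF ej(2)]
  have "r \<noteq> p"
  proof
    assume "r = p"
    then have "cut_y j = cut_y (Suc j)"
      unfolding cut_y_def using jk(3) line_y_commute E0(4) by (simp add: r_def)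
    then show False using cut_y_neq[of j "Suc j"] ej by simp
  qed
  then have "k \<noteq> Suc (Suc j)" using jk(4) unfolding r_def by auto
  then have k3: "Suc (Suc (Suc j)) \<le> k" using jk(1) \<open>k \<noteq> Suc j\<close> by arith
  define b where "b = vs ! (k - 1)"
  have kk: "Suc (k - 1) = k" "Suc (k - 1) < length vs" using k3 jk by auto
  note E2 = edgeD[of "k - 1", unfolded kk(1)]
  have edges: "{a, r} \<in> tri_edges T" "{p, a} \<in> tri_edges T" "{p, b} \<in> tri_edges T"
    using edge[OF ej(2)] edge[OF ej(1)] edge[OF kk(2)] jk kk(1)
    unfolding a_def r_def b_def by (simp_all add: insert_commute)
  have side: "(fst a < c) \<noteq> (fst p < c)" "(fst b < c) \<noteq> (fst p < c)"
    using E0(5) E2(5) kk jk unfolding a_def b_def by auto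
  have "(fst r < c) = (fst p < c)" using E0(5) E1(5) jk(3) unfolding r_def by auto
  moreover have "fst r \<noteq> c" using not_on_line[OF E1(2)] unfolding r_def .
  moreover have "\<not> (min c (fst p) \<le> fst r \<and> fst r \<le> max c (fst p))"
    using iso E1(2) \<open>r \<noteq> p\<close> unfolding r_def by blast
  ultimately have r: "min c (fst r) < fst p" "fst p < max c (fst r)"
    using pc by (auto simp: min_def max_def split: if_splits)
  have "cut_y j = line_y p a c" "cut_y (Suc j) = line_y a r c" "cut_y (k - 1) = line_y p b c"
    unfolding cut_y_def a_def r_def b_def using jk kk E2(4) line_y_commute by simp_all
  then have "(line_y p a c < line_y a r c \<and> line_y a r c < line_y p b c) \<or>
             (line_y p a c > line_y a r c \<and> line_y a r c > line_y p b c)"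
    using cut_y_between[of j "Suc j" "k - 1"] k3 jk by fastforce
  from tri_edge_not_through_wedge[OF triangulation distinct edges side pc r this] show False .
qed

end

lemma tdeg_le_2_if_unique:
  assumes uniq: "\<And>j k. j < length vs \<Longrightarrow> k < length vs \<Longrightarrow> vs ! j = q \<Longrightarrow> vs ! k = q \<Longrightarrow> j = k"
  shows "tdeg q vs \<le> 2"
proof (cases "\<exists>j0<length vs. vs ! j0 = q")
  case False
  then have "q \<notin> e" if "e \<in> path_edges vs" for e
    using that unfolding path_edges_def by (auto dest: Suc_lessD)
  then have "{e \<in> path_edges vs. q \<in> e} = {}" by blast
  then show ?thesis unfolding tdeg_def by (simp only: card.empty zero_le)
next
  case True
  then obtain j0 where j0: "j0 < length vs" "vs ! j0 = q" by blast
  have "{e \<in> path_edges vs. q \<in> e} \<subseteq> {{vs ! (j0 - 1), q}, {q, vs ! Suc j0}}"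
  proof
    fix e assume "e \<in> {e \<in> path_edges vs. q \<in> e}"
    then obtain j where j: "e = {vs ! j, vs ! Suc j}" "Suc j < length vs" "q \<in> e"
      unfolding path_edges_def by blast
    then have "vs ! j = q \<or> vs ! Suc j = q" by blast
    then have "j = j0 \<or> Suc j = j0"
      using uniq[OF _ j0(1) _ j0(2), of j] uniq[OF _ j0(1) _ j0(2), of "Suc j"] j(2) by auto
    then show "e \<in> {{vs ! (j0 - 1), q}, {q, vs ! Suc j0}}" using j(1) j0(2) by auto
  qed
  then have "tdeg q vs \<le> card {{vs ! (j0 - 1), q}, {q, vs ! Suc j0}}"
    unfolding tdeg_def by (rule card_mono[rotated]) simp
  also have "\<dots> \<le> 2" by (simp add: card_insert_if)
  finally show ?thesis .
qed

lemma tdeg_le_2: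
  assumes "triangulation P T" "distinct_abscissae P" "is_tpath P T (vline c) vs"
    and iso: "\<forall>q\<in>P. q \<noteq> p \<longrightarrow> \<not> (min c (fst p) \<le> fst q \<and> fst q \<le> max c (fst p))"
  shows "tdeg p vs \<le> 2"
proof (rule tdeg_le_2_if_unique)
  interpret vline_tpath P T c vs using assms(1-3) by unfold_locales
  fix j k assume jk: "j < length vs" "k < length vs" "vs ! j = p" "vs ! k = p"
  show "j = k"
  proof (rule ccontr)
    assume "j \<noteq> k"
    then consider "j < k" | "k < j" by linarith
    then show False
      using isolated_vertex_not_revisited[OF iso] jk by cases blast+
  qed
qed

section \<open>Noncrossing T-paths on both sides of the point\<close>

lemma noncrossing_segments_keep_order:
  assumes nc: "open_segment l1 r1 \<inter> open_segment l2 r2 = {}"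
    and m: "max (fst l1) (fst l2) < m" "m < min (fst r1) (fst r2)"
    and below: "line_y l1 r1 m < line_y l2 r2 m"
    and x: "max (fst l1) (fst l2) \<le> x" "x \<le> min (fst r1) (fst r2)"
  shows "line_y l1 r1 x \<le> line_y l2 r2 x"
proof (rule ccontr)
  assume above: "\<not> ?thesis"
  obtain A B where AB: "\<And>t. line_y l1 r1 t - line_y l2 r2 t = A + B * t"
    using line_y_diff_affine by blast
  obtain x0 where x0: "min m x < x0" "x0 < max m x" "line_y l1 r1 x0 - line_y l2 r2 x0 = 0"
    using affine_fun_zero_between[where f = "\<lambda>t. line_y l1 r1 t - line_y l2 r2 t" and s = m and t = x,
        OF AB] below above
    by auto
  have "min (fst l1) (fst r1) < x0" "x0 < max (fst l1) (fst r1)"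
       "min (fst l2) (fst r2) < x0" "x0 < max (fst l2) (fst r2)"
    using x0 x m by (auto simp: min_def max_def split: if_splits)
  then have "(x0, line_y l1 r1 x0) \<in> open_segment l1 r1" "(x0, line_y l2 r2 x0) \<in> open_segment l2 r2"
    by (simp_all add: in_open_segment_line_y)
  then show False using nc x0(3) by auto
qed

text \<open>An edge \<open>sq\<close> from the left that lies inside the wedge at \<open>w\<close> and crosses neither of its
  edges cannot end short of \<open>w\<close> (its end would lie in the empty region at \<open>w\<close>) nor beyond \<open>w\<close>
  (it would pass through \<open>w\<close>).\<close>

lemma trapped_edge_ends_at_right_apex:
  assumes xi: "distinct_abscissae P" and PP: "w \<in> P" "q \<in> P"
    and L: "fst u < c1" "fst d < c1" "fst s < c1" and R: "c2 < fst w" "c2 < fst q"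
    and m: "c1 < m" "m < c2"
    and e: "empty_segment P s q"
    and nc1: "open_segment s q \<inter> open_segment u w = {}"
    and nc2: "open_segment d w \<inter> open_segment s q = {}"
    and h1: "line_y d w m < line_y s q m" and h2: "line_y s q m < line_y u w m"
    and reg: "convex hull {w, (c2, line_y w u c2), (c2, line_y w d c2)} \<inter> P \<subseteq> {w}"
  shows "q = w"
proof -
  have ne: "fst s \<noteq> fst q" "fst u \<noteq> fst w" "fst d \<noteq> fst w" using L R m by auto
  have order: "line_y s q x \<le> line_y u w x" "line_y d w x \<le> line_y s q x"
    if "c2 \<le> x" "x \<le> min (fst q) (fst w)" for x
    using noncrossing_segments_keep_order[OF nc1 _ _ h2] noncrossing_segments_keep_order[OF nc2 _ _ h1]
      that L R m by auto
  consider "fst q < fst w" | "fst w < fst q" | "fst q = fst w" by linarith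
  then show ?thesis
  proof cases
    case 1
    have "line_y s q (fst q) = snd q" using line_y_right[OF ne(1)] .
    then have "q \<in> convex hull {w, (c2, line_y w u c2), (c2, line_y w d c2)}"
      using order[of "fst q"] 1 R line_y_commute[OF ne(2)] line_y_commute[OF ne(3)]
      by (intro in_convex_hull_wedge) auto
    then show ?thesis using reg PP by auto
  next
    case 2
    have "line_y u w (fst w) = snd w" "line_y d w (fst w) = snd w" using line_y_right ne by auto
    then have "line_y s q (fst w) = snd w" using order[of "fst w"] 2 R by simp
    moreover have "min (fst s) (fst q) < fst w" "fst w < max (fst s) (fst q)" using 2 L R m by auto
    ultimately show ?thesis using not_on_empty_segment[OF e PP(1)] by blast
  next
    case 3
    then show ?thesis using xi PP unfolding distinct_abscissae_def by blast
  qed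
qed

lemma trapped_edge_ends_at_left_apex:
  assumes xi: "distinct_abscissae P" and PP: "v \<in> P" "q \<in> P"
    and L: "fst v < c1" "fst q < c1" and R: "c2 < fst a" "c2 < fst b" "c2 < fst r"
    and m: "c1 < m" "m < c2"
    and e: "empty_segment P q r"
    and nc1: "open_segment q r \<inter> open_segment v a = {}"
    and nc2: "open_segment v b \<inter> open_segment q r = {}"
    and h1: "line_y v b m < line_y q r m" and h2: "line_y q r m < line_y v a m"
    and reg: "convex hull {v, (c1, line_y v a c1), (c1, line_y v b c1)} \<inter> P \<subseteq> {v}"
  shows "q = v"
proof -
  have ne: "fst q \<noteq> fst r" "fst v \<noteq> fst a" "fst v \<noteq> fst b" using L R m by auto
  have order: "line_y q r x \<le> line_y v a x" "line_y v b x \<le> line_y q r x"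
    if "max (fst q) (fst v) \<le> x" "x \<le> c1" for x
    using noncrossing_segments_keep_order[OF nc1 _ _ h2] noncrossing_segments_keep_order[OF nc2 _ _ h1]
      that L R m by auto
  consider "fst v < fst q" | "fst q < fst v" | "fst q = fst v" by linarith
  then show ?thesis
  proof cases
    case 1
    then have "q \<in> convex hull {v, (c1, line_y v a c1), (c1, line_y v b c1)}"
      using order[of "fst q"] L by (intro in_convex_hull_wedge) auto
    then show ?thesis using reg PP by auto
  next
    case 2
    then have "line_y q r (fst v) = snd v" using order[of "fst v"] L by simp
    moreover have "min (fst q) (fst r) < fst v" "fst v < max (fst q) (fst r)" using 2 L R m by auto
    ultimately show ?thesis using not_on_empty_segment[OF e PP(1)] by blast
  next
    case 3
    then show ?thesis using xi PP unfolding distinct_abscissae_def by blast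
  qed
qed

lemma opposite_wedges_must_cross:
  assumes xi: "distinct_abscissae P"
    and PP: "v \<in> P" "a \<in> P" "b \<in> P" "u \<in> P" "d \<in> P" "w \<in> P"
    and L: "fst v < c1" "fst u < c1" "fst d < c1"
    and R: "c2 < fst a" "c2 < fst b" "c2 < fst w"
    and m: "c1 < m" "m < c2"
    and E: "empty_segment P v a" "empty_segment P v b" "empty_segment P u w" "empty_segment P d w"
    and NC: "\<And>x y. x \<in> {a, b} \<Longrightarrow> y \<in> {u, d} \<Longrightarrow>
              {v, x} = {y, w} \<or> open_segment v x \<inter> open_segment y w = {}"
    and hv: "line_y v b m < y0" "y0 < line_y v a m"
    and hw: "line_y d w m < y0" "y0 < line_y u w m"
    and regv: "convex hull {v, (c1, line_y v a c1), (c1, line_y v b c1)} \<inter> P \<subseteq> {v}"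
    and regw: "convex hull {w, (c2, line_y w u c2), (c2, line_y w d c2)} \<inter> P \<subseteq> {w}"
  shows False
proof -
  have xR: "c2 < fst x" if "x \<in> {a, b}" for x using that R by auto
  have yL: "fst y < c1" if "y \<in> {u, d}" for y using that L by auto
  have same_or_disjoint: "v = y \<and> x = w \<or> open_segment v x \<inter> open_segment y w = {}"
    if "x \<in> {a, b}" "y \<in> {u, d}" for x y
    using NC[OF that] L R xR[OF that(1)] yL[OF that(2)] m by (auto simp: doubleton_eq_iff)
  have same: "v = y \<and> x = w" if "x \<in> {a, b}" "y \<in> {u, d}" "line_y v x m = line_y y w m" for x y
  proof -
    have "min (fst v) (fst x) < m" "m < max (fst v) (fst x)"
         "min (fst y) (fst w) < m" "m < max (fst y) (fst w)"
      using L R xR[OF that(1)] yL[OF that(2)] m by auto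
    then have "(m, line_y v x m) \<in> open_segment v x \<inter> open_segment y w"
      using that(3) in_open_segment_line_y[of v x m] in_open_segment_line_y[of y w m] by simp
    then show ?thesis using same_or_disjoint[OF that(1,2)] by blast
  qed
  have disjoint: "open_segment v x \<inter> open_segment y w = {}"
    if "x \<in> {a, b}" "y \<in> {u, d}" "line_y v x m \<noteq> line_y y w m" for x y
    using same_or_disjoint[OF that(1,2)] that(3) by auto
  have right: "x = w"
    if "x \<in> {a, b}" "line_y d w m < line_y v x m" "line_y v x m < line_y u w m" "empty_segment P v x" for x
    using trapped_edge_ends_at_right_apex[OF xi PP(6) _ L(2,3,1) R(3) xR[OF that(1)] m that(4)
        _ _ that(2,3) regw] disjoint[OF that(1), of u] disjoint[OF that(1), of d] that(1,2,3) PP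
    by (auto simp: Int_commute)
  have left: "y = v"
    if "y \<in> {u, d}" "line_y v b m < line_y y w m" "line_y y w m < line_y v a m" "empty_segment P y w" for y
    using trapped_edge_ends_at_left_apex[OF xi PP(1) _ L(1) yL[OF that(1)] R m that(4)
        _ _ that(2,3) regv] disjoint[of a y] disjoint[of b y] that(1,2,3) PP
    by (auto simp: Int_commute)
  have "a = w \<or> u = v"
    using right[of a] left[of u] same[of a u] hv hw E(1,3) by (cases rule: linorder_cases) auto
  moreover have "b = w \<or> d = v"
    using right[of b] left[of d] same[of b d] hv hw E(2,4) by (cases rule: linorder_cases) auto
  ultimately show False using hv hw by auto
qed

lemma bool_seq_change_step:
  fixes Q :: "nat \<Rightarrow> bool"
  shows "Q 0 \<noteq> Q n \<Longrightarrow> \<exists>j<n. Q j \<noteq> Q (Suc j)"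
  by (induction n) (auto intro: less_SucI)

lemma finite_path_edges: "finite (path_edges vs)"
proof -
  have "path_edges vs \<subseteq> (\<lambda>j. {vs ! j, vs ! Suc j}) ` {..<length vs}"
    unfolding path_edges_def by auto
  then show ?thesis by (rule finite_subset) simp
qed

lemma tdeg_0_not_in_edge: "tdeg q vs = 0 \<Longrightarrow> e \<in> path_edges vs \<Longrightarrow> q \<notin> e"
  unfolding tdeg_def using finite_path_edges[of vs] by auto

lemma tdeg_0_not_vertex:
  assumes "2 \<le> length vs" "tdeg q vs = 0" "j < length vs"
  shows "vs ! j \<noteq> q"
proof -
  have "\<exists>i. Suc i < length vs \<and> (j = i \<or> j = Suc i)"
  proof (cases "Suc j < length vs")
    case False
    then show ?thesis using assms(1,3) by (intro exI[of _ "j - 1"]) auto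
  qed blast
  then obtain i where "Suc i < length vs" "j = i \<or> j = Suc i" by blast
  then show ?thesis
    using tdeg_0_not_in_edge[OF assms(2), of "{vs ! i, vs ! Suc i}"] unfolding path_edges_def by auto
qed

context vline_tpath
begin

lemma edge_avoids_isolated_point:
  assumes p: "p \<in> P" and np: "\<forall>j<length vs. vs ! j \<noteq> p"
    and side: "\<forall>q\<in>P. q \<noteq> p \<longrightarrow> fst q < c1 \<or> c2 < fst q"
    and pm: "c1 < fst p" "fst p < c2" and cc: "c1 \<le> c" "c \<le> c2"
    and j: "Suc j < length vs"
  shows "line_y (vs ! j) (vs ! Suc j) (fst p) \<noteq> snd p"
proof -
  note e = edgeD[OF j]
  have "fst (vs ! j) < c1 \<or> c2 < fst (vs ! j)" "fst (vs ! Suc j) < c1 \<or> c2 < fst (vs ! Suc j)"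
    using side e(1,2) np j by auto
  then have "min (fst (vs ! j)) (fst (vs ! Suc j)) < fst p" "fst p < max (fst (vs ! j)) (fst (vs ! Suc j))"
    using e(5) pm cc by (auto simp: min_def max_def split: if_splits)
  then show ?thesis by (rule not_on_empty_segment[OF e(3) p])
qed

lemma consecutive_edges_straddle:
  assumes fin: "finite P" and p: "p \<in> P" and np: "\<forall>j<length vs. vs ! j \<noteq> p"
    and side: "\<forall>q\<in>P. q \<noteq> p \<longrightarrow> fst q < c1 \<or> c2 < fst q"
    and pm: "c1 < fst p" "fst p < c2" and cc: "c1 \<le> c" "c \<le> c2"
  obtains j where "Suc (Suc j) < length vs"
    "(line_y (vs ! j) (vs ! Suc j) (fst p) < snd p) \<noteq>
     (line_y (vs ! Suc j) (vs ! Suc (Suc j)) (fst p) < snd p)"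
proof -
  define H where "H j = line_y (vs ! j) (vs ! Suc j) (fst p)" for j
  note Hne = edge_avoids_isolated_point[OF p np side pm cc, folded H_def]
  define K where "K = length vs - 2"
  have K: "Suc K < length vs" "vs ! 1 = vs ! Suc 0" "vs ! (length vs - 2) = vs ! K"
      "vs ! (length vs - 1) = vs ! Suc K"
    using length_ge_3 unfolding K_def by (auto simp: Suc_diff_Suc numeral_2_eq_2)
  have "(H 0 < snd p) \<noteq> (H K < snd p)"
    using end_edges_straddle[OF fin p] Hne[of 0] Hne[OF K(1)] K unfolding H_def by simp
  then obtain j where "j < K" "(H j < snd p) \<noteq> (H (Suc j) < snd p)"
    using bool_seq_change_step[of "\<lambda>j. H j < snd p"] by blast
  then show ?thesis using that[of j] K unfolding H_def by simp
qed

lemma straddling_wedge: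
  assumes fin: "finite P" and p: "p \<in> P" and np: "\<forall>j<length vs. vs ! j \<noteq> p"
    and side: "\<forall>q\<in>P. q \<noteq> p \<longrightarrow> fst q < c1 \<or> c2 < fst q"
    and pm: "c1 < fst p" "fst p < c2" and cc: "c1 \<le> c" "c \<le> c2"
  obtains v x1 x2 where "v \<in> P" "x1 \<in> P" "x2 \<in> P"
    "{v, x1} \<in> path_edges vs" "{v, x2} \<in> path_edges vs"
    "empty_segment P v x1" "empty_segment P v x2"
    "(fst v < c) \<noteq> (fst x1 < c)" "(fst v < c) \<noteq> (fst x2 < c)" "(fst v < c) \<noteq> (fst p < c)"
    "line_y v x2 (fst p) < snd p" "snd p < line_y v x1 (fst p)"
    "convex hull {v, (c, line_y v x1 c), (c, line_y v x2 c)} \<inter> P \<subseteq> {v}"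
proof -
  define H where "H j = line_y (vs ! j) (vs ! Suc j) (fst p)" for j
  note Hne = edge_avoids_isolated_point[OF p np side pm cc, folded H_def]
  obtain j where j1: "Suc (Suc j) < length vs" and j: "(H j < snd p) \<noteq> (H (Suc j) < snd p)"
    using consecutive_edges_straddle[OF fin p np side pm cc] unfolding H_def by blast
  define v where "v = vs ! Suc j"
  note Ea = edgeD[OF Suc_lessD[OF j1]] and Eb = edgeD[OF j1]
  have P: "v \<in> P" "vs ! j \<in> P" "vs ! Suc (Suc j) \<in> P" using Ea Eb unfolding v_def by auto
  have edges: "{v, vs ! j} \<in> path_edges vs" "{v, vs ! Suc (Suc j)} \<in> path_edges vs"
    unfolding path_edges_def v_def using j1 by (auto simp: insert_commute)
  have empty: "empty_segment P v (vs ! j)" "empty_segment P v (vs ! Suc (Suc j))"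
    using Ea(3) Eb(3) empty_segment_commute unfolding v_def by auto
  have sides: "(fst v < c) \<noteq> (fst (vs ! j) < c)" "(fst v < c) \<noteq> (fst (vs ! Suc (Suc j)) < c)"
    using Ea(5) Eb(5) unfolding v_def by auto
  have heights: "line_y v (vs ! j) (fst p) = H j" "line_y v (vs ! Suc (Suc j)) (fst p) = H (Suc j)"
    unfolding H_def v_def using line_y_commute Ea(4) by simp_all
  have region: "convex hull {v, (c, line_y v (vs ! j) c), (c, line_y v (vs ! Suc (Suc j)) c)} \<inter> P \<subseteq> {v}"
    using empty_region[of "Suc j"] j1 unfolding v_def by simp
  have between: "min (H j) (H (Suc j)) \<le> snd p" "snd p \<le> max (H j) (H (Suc j))"
    using j by (auto simp: min_def max_def)
  have "(fst v < c) \<noteq> (fst p < c)"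
  proof
    assume "(fst v < c) = (fst p < c)"
    moreover have "v \<noteq> p" using np Suc_lessD[OF j1] unfolding v_def by blast
    ultimately have "min (fst v) c \<le> fst p" "fst p \<le> max (fst v) c" "fst v \<noteq> c"
      using side P(1) pm cc by (auto simp: min_def max_def)
    then have "p \<in> convex hull {v, (c, line_y v (vs ! j) c), (c, line_y v (vs ! Suc (Suc j)) c)}"
      using between heights by (intro in_convex_hull_wedge) simp_all
    then show False using region p \<open>v \<noteq> p\<close> by blast
  qed
  show ?thesis
  proof (cases "H j < snd p")
    case True
    then show ?thesis
      using that[of v "vs ! Suc (Suc j)" "vs ! j"] P edges empty sides heights region j Hne[OF Suc_lessD[OF j1]]
        Hne[OF j1] \<open>(fst v < c) \<noteq> (fst p < c)\<close> by (auto simp: insert_commute)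
  next
    case False
    then show ?thesis
      using that[of v "vs ! j" "vs ! Suc (Suc j)"] P edges empty sides heights region j Hne[OF Suc_lessD[OF j1]]
        Hne[OF j1] \<open>(fst v < c) \<noteq> (fst p < c)\<close> by auto
  qed
qed

end

lemma noncrossing_tpaths_edges:
  assumes xi: "distinct_abscissae P" and ncr: "\<not> tpaths_cross vs ws"
    and e: "{a, b} \<in> path_edges vs" "{c, d} \<in> path_edges ws"
    and P: "a \<in> P" "b \<in> P" "c \<in> P" "d \<in> P"
    and E: "empty_segment P a b" "empty_segment P c d"
    and ne: "fst a \<noteq> fst b" "fst c \<noteq> fst d"
  shows "{a, b} = {c, d} \<or> open_segment a b \<inter> open_segment c d = {}"
  using proper_crossI[OF P xi E ne] ncr e unfolding tpaths_cross_def by blast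

lemma tdeg_not_both_zero:
  assumes T: "triangulation P T" and T': "triangulation P T'"
    and xi: "distinct_abscissae P" and fin: "finite P" and p: "p \<in> P"
    and side: "\<forall>q\<in>P. q \<noteq> p \<longrightarrow> fst q < c1 \<or> c2 < fst q"
    and pm: "c1 < fst p" "fst p < c2"
    and vs: "is_tpath P T (vline c1) vs" and ws: "is_tpath P T' (vline c2) ws"
    and ncr: "\<not> tpaths_cross vs ws"
  shows "tdeg p vs \<noteq> 0 \<or> tdeg p ws \<noteq> 0"
proof (rule ccontr)
  assume "\<not> ?thesis"
  then have d: "tdeg p vs = 0" "tdeg p ws = 0" by simp_all
  interpret A: vline_tpath P T c1 vs using T xi vs by unfold_locales
  interpret B: vline_tpath P T' c2 ws using T' xi ws by unfold_locales
  have np: "\<forall>j<length vs. vs ! j \<noteq> p" "\<forall>j<length ws. ws ! j \<noteq> p"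
    using tdeg_0_not_vertex[OF A.length_ge_2 d(1)] tdeg_0_not_vertex[OF B.length_ge_2 d(2)] by blast+
  have c12: "c1 \<le> c2" using pm by simp
  obtain v x1 x2 where V: "v \<in> P" "x1 \<in> P" "x2 \<in> P"
    "{v, x1} \<in> path_edges vs" "{v, x2} \<in> path_edges vs" "empty_segment P v x1" "empty_segment P v x2"
    "(fst v < c1) \<noteq> (fst x1 < c1)" "(fst v < c1) \<noteq> (fst x2 < c1)" "(fst v < c1) \<noteq> (fst p < c1)"
    "line_y v x2 (fst p) < snd p" "snd p < line_y v x1 (fst p)"
    "convex hull {v, (c1, line_y v x1 c1), (c1, line_y v x2 c1)} \<inter> P \<subseteq> {v}"
    by (rule A.straddling_wedge[OF fin p np(1) side pm order_refl c12])
  obtain w y1 y2 where W: "w \<in> P" "y1 \<in> P" "y2 \<in> P"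
    "{w, y1} \<in> path_edges ws" "{w, y2} \<in> path_edges ws" "empty_segment P w y1" "empty_segment P w y2"
    "(fst w < c2) \<noteq> (fst y1 < c2)" "(fst w < c2) \<noteq> (fst y2 < c2)" "(fst w < c2) \<noteq> (fst p < c2)"
    "line_y w y2 (fst p) < snd p" "snd p < line_y w y1 (fst p)"
    "convex hull {w, (c2, line_y w y1 c2), (c2, line_y w y2 c2)} \<inter> P \<subseteq> {w}"
    by (rule B.straddling_wedge[OF fin p np(2) side pm c12 order_refl])
  have "x1 \<noteq> p" "x2 \<noteq> p" "y1 \<noteq> p" "y2 \<noteq> p"
    using tdeg_0_not_in_edge[OF d(1)] tdeg_0_not_in_edge[OF d(2)] V(4,5) W(4,5) by auto
  moreover have vL: "fst v < c1" using V(10) pm by auto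
  moreover have wR: "c2 < fst w" using W(10) B.not_on_line[OF W(1)] pm by auto
  ultimately have xR: "c2 < fst x1" "c2 < fst x2" and yL: "fst y1 < c1" "fst y2 < c1"
    using side V(2,3,8,9) W(2,3,8,9) by auto
  have NC: "{v, x} = {y, w} \<or> open_segment v x \<inter> open_segment y w = {}"
    if x: "x \<in> {x1, x2}" and y: "y \<in> {y1, y2}" for x y
  proof -
    have X: "x \<in> P" "empty_segment P v x" "{v, x} \<in> path_edges vs" "fst v \<noteq> fst x"
      using x V xR vL pm by auto
    have Y: "y \<in> P" "empty_segment P y w" "{y, w} \<in> path_edges ws" "fst y \<noteq> fst w"
      using y W yL wR pm empty_segment_commute[of P w y] by (auto simp: insert_commute)
    show ?thesis
      by (rule noncrossing_tpaths_edges[OF xi ncr X(3) Y(3) V(1) X(1) Y(1) W(1) X(2) Y(2) X(4) Y(4)])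
  qed
  have hw: "line_y y2 w (fst p) < snd p" "snd p < line_y y1 w (fst p)"
    using W(11,12) line_y_commute[of w y1] line_y_commute[of w y2] wR yL pm by auto
  show False
    by (rule opposite_wedges_must_cross[OF xi V(1,2,3) W(2,3,1) vL yL xR wR pm V(6,7)
        empty_segment_commute[THEN iffD1, OF W(6)] empty_segment_commute[THEN iffD1, OF W(7)] NC
        V(11,12) hw V(13) W(13)])
qed

section \<open>The slab configuration\<close>

lemma sorted_fst_less:
  fixes p :: "nat \<Rightarrow> pt"
  assumes sorted: "\<forall>j\<in>{1..<n}. fst (p j) < fst (p (Suc j))"
  shows "1 \<le> j \<Longrightarrow> j < k \<Longrightarrow> k \<le> n \<Longrightarrow> fst (p j) < fst (p k)"
proof (induction k)
  case (Suc k)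
  show ?case
  proof (cases "j = k")
    case True
    then show ?thesis using sorted Suc.prems by auto
  next
    case False
    then have "fst (p j) < fst (p k)" using Suc by auto
    moreover have "fst (p k) < fst (p (Suc k))" using sorted Suc.prems False by auto
    ultimately show ?thesis by linarith
  qed
qed simp

lemma sorted_fst_le:
  fixes p :: "nat \<Rightarrow> pt"
  assumes "\<forall>j\<in>{1..<n}. fst (p j) < fst (p (Suc j))" "1 \<le> j" "j \<le> k" "k \<le> n"
  shows "fst (p j) \<le> fst (p k)"
  using sorted_fst_less[OF assms(1)] assms(2-4) by (cases "j = k") (auto simp: less_imp_le)

lemma distinct_abscissae_sorted:
  fixes p :: "nat \<Rightarrow> pt"
  assumes "\<forall>j\<in>{1..<n}. fst (p j) < fst (p (Suc j))"
  shows "distinct_abscissae (p ` {1..n})"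
  unfolding distinct_abscissae_def
proof (intro ballI impI)
  fix q q' assume "q \<in> p ` {1..n}" "q' \<in> p ` {1..n}" "fst q = fst q'"
  then obtain j k where "j \<in> {1..n}" "k \<in> {1..n}" "q = p j" "q' = p k" "fst (p j) = fst (p k)"
    by blast
  then show "q = q'"
    using sorted_fst_less[OF assms, of j k] sorted_fst_less[OF assms, of k j]
    by (cases j k rule: linorder_cases) auto
qed

lemma slab_isolates_point:
  fixes p :: "nat \<Rightarrow> pt" and c :: "nat \<Rightarrow> real"
  assumes P_def: "P = p ` {1..n}"
    and sorted: "\<forall>j\<in>{1..<n}. fst (p j) < fst (p (Suc j))"
    and left: "fst (p 1) < c 1"
    and right: "c (n - 1) < fst (p n)"
    and slabs: "\<forall>j\<in>{2..n - 1}. \<forall>q\<in>P. (c (j - 1) < fst q \<and> fst q < c j) \<longleftrightarrow> q = p j"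
    and i: "1 \<le> i" "i \<le> n - 2"
  shows "c i < fst (p (Suc i))" "fst (p (Suc i)) < c (Suc i)"
    and "\<forall>q\<in>P. q \<noteq> p (Suc i) \<longrightarrow> fst q < c i \<or> c (Suc i) < fst q"
proof -
  have in_slab: "c (j - 1) < fst (p j) \<and> fst (p j) < c j" if "j \<in> {2..n - 1}" for j
  proof -
    have "p j \<in> P" using that unfolding P_def by auto
    then show ?thesis using slabs that by blast
  qed
  from in_slab[of "Suc i"] i show "c i < fst (p (Suc i))" "fst (p (Suc i)) < c (Suc i)" by auto
  have below: "fst (p i) < c i"
    using left in_slab[of i] i by (cases "i = 1") auto
  have above: "c (Suc i) < fst (p (Suc (Suc i)))"
    using right in_slab[of "Suc (Suc i)"] i by (cases "Suc (Suc i) = n") auto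
  show "\<forall>q\<in>P. q \<noteq> p (Suc i) \<longrightarrow> fst q < c i \<or> c (Suc i) < fst q"
  proof (intro ballI impI)
    fix q assume "q \<in> P" "q \<noteq> p (Suc i)"
    then obtain j where j: "j \<in> {1..n}" "q = p j" "j \<noteq> Suc i" unfolding P_def by blast
    have "i \<le> n" using i by simp
    from j consider "j \<le> i" | "Suc (Suc i) \<le> j" by linarith
    then show "fst q < c i \<or> c (Suc i) < fst q"
      using sorted_fst_le[OF sorted, of j i] sorted_fst_le[OF sorted, of "Suc (Suc i)" j]
        j \<open>i \<le> n\<close> below above
      by cases auto
  qed
qed

theorem lemma5:
  fixes p :: "nat \<Rightarrow> real \<times> real" and n i :: nat and c :: "nat \<Rightarrow> real" and P :: "(real \<times> real) set"
  assumes P_def: "P = p ` {1..n}"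
    and sorted: "\<forall>j\<in>{1..<n}. fst (p j) < fst (p (Suc j))"
    and left: "fst (p 1) < c 1"
    and right: "c (n - 1) < fst (p n)"
    and slabs: "\<forall>j\<in>{2..n - 1}. \<forall>q\<in>P. (c (j - 1) < fst q \<and> fst q < c j) \<longleftrightarrow> q = p j"
    and i: "1 \<le> i" "i \<le> n - 2"
  shows "(\<forall>T vs. triangulation P T \<and> is_tpath P T (vline (c i)) vs
            \<longrightarrow> tdeg (p (Suc i)) vs \<in> {0, 1, 2}) \<and>
         (\<forall>T vs. triangulation P T \<and> is_tpath P T (vline (c (Suc i))) vs
            \<longrightarrow> tdeg (p (Suc i)) vs \<in> {0, 1, 2}) \<and>
         (\<forall>T T' vs ws. triangulation P T \<and> triangulation P T' \<and>
            is_tpath P T (vline (c i)) vs \<and> is_tpath P T' (vline (c (Suc i))) ws \<and>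
            \<not> tpaths_cross vs ws
            \<longrightarrow> tdeg (p (Suc i)) vs \<noteq> 0 \<or> tdeg (p (Suc i)) ws \<noteq> 0)"
proof -
  have xi: "distinct_abscissae P" using distinct_abscissae_sorted[OF sorted] P_def by simp
  have fin: "finite P" and pP: "p (Suc i) \<in> P" using P_def i by auto
  note iso = slab_isolates_point[OF assms]
  have "\<forall>q\<in>P. q \<noteq> p (Suc i) \<longrightarrow>
          \<not> (min c' (fst (p (Suc i))) \<le> fst q \<and> fst q \<le> max c' (fst (p (Suc i))))"
    if "c' \<in> {c i, c (Suc i)}" for c'
    using iso that by (auto simp: min_def max_def)
  then have deg: "tdeg (p (Suc i)) vs \<le> 2"
    if "triangulation P T" "is_tpath P T (vline c') vs" "c' \<in> {c i, c (Suc i)}" for T vs c'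
    using tdeg_le_2[OF that(1) xi that(2)] that(3) by blast
  show ?thesis
  proof (intro conjI allI impI)
    fix T vs assume "triangulation P T \<and> is_tpath P T (vline (c i)) vs"
    then show "tdeg (p (Suc i)) vs \<in> {0, 1, 2}" using deg[of T c' vs for c'] by fastforce
  next
    fix T vs assume "triangulation P T \<and> is_tpath P T (vline (c (Suc i))) vs"
    then show "tdeg (p (Suc i)) vs \<in> {0, 1, 2}" using deg[of T c' vs for c'] by fastforce
  next
    fix T T' vs ws
    assume "triangulation P T \<and> triangulation P T' \<and> is_tpath P T (vline (c i)) vs \<and>
      is_tpath P T' (vline (c (Suc i))) ws \<and> \<not> tpaths_cross vs ws"
    then show "tdeg (p (Suc i)) vs \<noteq> 0 \<or> tdeg (p (Suc i)) ws \<noteq> 0"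
      using tdeg_not_both_zero[OF _ _ xi fin pP iso(3) iso(1,2)] by blast
  qed
qed
end
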